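(* Let $X$ be a discrete metric space. There exists an approximate unit for the ideal $C_0(X\times X;\Delta)\subseteq \ell^\infty(X\times X)$ consisting of positive definite functions if and only if there exists a metrically proper function of negative type on $X\times X$.
   Context: Let $(X,d)$ be a metric space with the discrete topology. A function $f:X\times X\to\mathbb{C}$ is positive definite if for every $n\ge1$, all $x_1,\dots,x_n\in X$ and all $z_1,\dots,z_n\in\mathbb{C}$ one has $\sum_{i,j}\overline{z_i}\,f(x_i,x_j)\,z_j\ge 0$. A function $h:X\times X\to\mathbb{R}$ is of negative type if (a) $h(x,x)=0$ for all $x$; (b) $h(x,y)=h(y,x)$ for all $x,y$; (c) $\sum_{i,j}a_i h(x_i,x_j)a_j\le 0$ for all $n$, all $x_1,\dots,x_n\in X$ and all $a_1,\dots,a_n\in\mathbb{R}$ with $\sum_j a_j=0$. A function $f:X\times X\to\mathbb{C}$ is metrically proper if (a) for every $R>0$, $\sup\{|f(x,y)|: d(x,y)\le R\}<\infty$, and (b) for every $C>0$ there is $R>0$ such that $|f(x,y)|>C$ whenever $d(x,y)>R$. Let $\Delta$ be the diagonal of $X\times X$ and $C_0(X\times X;\Delta)$ the set of bounded functions $f$ on $X\times X$ such that for every $\epsilon>0$ there is $R>0$ with $|f(x,y)|<\epsilon$ whenever $d(x,y)>R$; it is an ideal in the $C^*$-algebra $\ell^\infty(X\times X)$ (sup norm). An approximate unit for $C_0(X\times X;\Delta)$ is a net $(u_\lambda)$ of elements of $C_0(X\times X;\Delta)$ such that $\|u_\lambda f-f\|_\infty\to0$ for every $f\in C_0(X\times X;\Delta)$;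 equivalently (for bounded nets), $u_\lambda\to1$ uniformly on each set $B_\Delta(R)=\{(x,y):d(x,y)<R\}$. *)

theory Defs
  imports "HOL-Analysis.Analysis"
begin

definition pos_def_kernel :: "('a \<Rightarrow> 'a \<Rightarrow> complex) \<Rightarrow> bool" where
  "pos_def_kernel f \<longleftrightarrow>
     (\<forall>n::nat. \<forall>x::nat \<Rightarrow> 'a. \<forall>z::nat \<Rightarrow> complex. n \<ge> 1 \<longrightarrow>
        (let s = (\<Sum>i<n. \<Sum>j<n. cnj (z i) * f (x i) (x j) * z j)
         in Im s = 0 \<and> Re s \<ge> 0))"

definition negative_type :: "('a \<Rightarrow> 'a \<Rightarrow> real) \<Rightarrow> bool" where
  "negative_type h \<longleftrightarrow>
     (\<forall>x. h x x = 0) \<and> (\<forall>x y. h x y = h y x) \<and>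
     (\<forall>n::nat. \<forall>x::nat \<Rightarrow> 'a. \<forall>a::nat \<Rightarrow> real. n \<ge> 1 \<longrightarrow> (\<Sum>j<n. a j) = 0 \<longrightarrow>
        (\<Sum>i<n. \<Sum>j<n. a i * h (x i) (x j) * a j) \<le> 0)"

definition metrically_proper :: "('a \<Rightarrow> 'a \<Rightarrow> real) \<Rightarrow> ('a \<Rightarrow> 'a \<Rightarrow> 'b::real_normed_vector) \<Rightarrow> bool" where
  "metrically_proper d f \<longleftrightarrow>
     (\<forall>R>0. \<exists>B. \<forall>x y. d x y \<le> R \<longrightarrow> norm (f x y) \<le> B) \<and>
     (\<forall>C>0. \<exists>R>0. \<forall>x y. d x y > R \<longrightarrow> norm (f x y) > C)"

definition C0_diag :: "('a \<Rightarrow> 'a \<Rightarrow> real) \<Rightarrow> ('a \<Rightarrow> 'a \<Rightarrow> complex) set" where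
  "C0_diag d = {f. (\<exists>B. \<forall>x y. norm (f x y) \<le> B) \<and>
     (\<forall>\<epsilon>>0. \<exists>R>0. \<forall>x y. d x y > R \<longrightarrow> norm (f x y) < \<epsilon>)}"

definition sup_norm :: "('a \<Rightarrow> 'a \<Rightarrow> complex) \<Rightarrow> real" where
  "sup_norm f = (SUP p\<in>UNIV. norm (f (fst p) (snd p)))"

text \<open>A net (u_lambda) is represented by the proper filter F it generates on the function space
  (the image of the tail filter of the directed index set); conversely every proper filter
  arises from a net in this way.\<close>
definition pd_approx_unit :: "('a \<Rightarrow> 'a \<Rightarrow> real) \<Rightarrow> ('a \<Rightarrow> 'a \<Rightarrow> complex) filter \<Rightarrow> bool" where
  "pd_approx_unit d F \<longleftrightarrow> F \<noteq> bot \<and>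
     (\<forall>\<^sub>F u in F. u \<in> C0_diag d \<and> pos_def_kernel u) \<and>
     (\<forall>f \<in> C0_diag d. ((\<lambda>u. sup_norm (\<lambda>x y. u x y * f x y - f x y)) \<longlongrightarrow> 0) F)"

end

theory Submission
  imports Defs
begin

(*
  If h is of negative type, then exp (-t h) is positive definite for every t >= 0 (Schoenberg):
  the matrices h(x_i, x_0) + h(x_j, x_0) - h(x_i, x_j) are positive semidefinite, so are their
  entrywise exponentials by the Schur product theorem, and exp (-t h) is a diagonal congruence of
  such an exponential. If h is moreover metrically proper, exp (-t h) vanishes at infinity away
  from the diagonal and tends to 1 uniformly on every tube d <= R as t -> 0+, so these kernels form
  an approximate unit.

  Conversely, an approximate unit provides positive definite u_k in C_0(X x X; Delta) with
  |u_k - 1| < 2^-k / 4 on the tube d <= k. Each h_k(x, y) = Re (u_k(x, x) + u_k(y, y) - u_k(x, y) -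
  u_k(y, x)) is of negative type, at most 2^-k on that tube and at least 1 far from the diagonal.
  Hence the series of the h_k converges to a function of negative type that is bounded on tubes
  and large off them, i.e. metrically proper.
*)

definition quad_form :: "nat \<Rightarrow> (nat \<Rightarrow> nat \<Rightarrow> real) \<Rightarrow> (nat \<Rightarrow> real) \<Rightarrow> real" where
  "quad_form n M a = (\<Sum>i<n. \<Sum>j<n. a i * M i j * a j)"

definition psd :: "nat \<Rightarrow> (nat \<Rightarrow> nat \<Rightarrow> real) \<Rightarrow> bool" where
  "psd n M \<longleftrightarrow> (\<forall>i<n. \<forall>j<n. M i j = M j i) \<and> (\<forall>a. 0 \<le> quad_form n M a)"

lemma psdI:
  assumes "\<And>i j. i < n \<Longrightarrow> j < n \<Longrightarrow> M i j = M j i" and "\<And>a. 0 \<le> quad_form n M a"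
  shows "psd n M"
  using assms unfolding psd_def by blast

lemma psd_sym: "psd n M \<Longrightarrow> i < n \<Longrightarrow> j < n \<Longrightarrow> M i j = M j i"
  unfolding psd_def by blast

lemma psd_quad_form_nonneg: "psd n M \<Longrightarrow> 0 \<le> quad_form n M a"
  unfolding psd_def by blast

lemma quad_form_cong:
  assumes "\<And>i. i < n \<Longrightarrow> a i = b i" and "\<And>i j. i < n \<Longrightarrow> j < n \<Longrightarrow> M i j = N i j"
  shows "quad_form n M a = quad_form n N b"
  unfolding quad_form_def using assms by (intro sum.cong) auto

lemma quad_form_diff:
  "quad_form n (\<lambda>i j. M i j - N i j) a = quad_form n M a - quad_form n N a"
  unfolding quad_form_def by (simp add: algebra_simps sum_subtractf)

lemma quad_form_add:
  "quad_form n (\<lambda>i j. M i j + N i j) a = quad_form n M a + quad_form n N a"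
  unfolding quad_form_def by (simp add: algebra_simps sum.distrib)

lemma quad_form_transpose: "quad_form n (\<lambda>i j. M j i) a = quad_form n M a"
  unfolding quad_form_def by (subst sum.swap) (simp add: mult_ac)

lemma quad_form_rank_one:
  "quad_form n (\<lambda>i j. c * (u i * u j)) a = c * (\<Sum>i<n. a i * u i)\<^sup>2"
  unfolding quad_form_def power2_eq_square sum_product
  by (simp add: sum_distrib_left mult_ac)

lemma quad_form_sum_kernel:
  "quad_form n (\<lambda>i j. u i + u j) a = 2 * (\<Sum>i<n. a i) * (\<Sum>i<n. a i * u i)"
proof -
  have "quad_form n (\<lambda>i j. u i + u j) a =
      (\<Sum>i<n. \<Sum>j<n. (a i * u i) * a j) + (\<Sum>i<n. \<Sum>j<n. a i * (a j * u j))"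
    by (simp add: quad_form_def algebra_simps sum.distrib)
  also have "\<dots> = (\<Sum>i<n. a i * u i) * (\<Sum>i<n. a i) + (\<Sum>i<n. a i) * (\<Sum>i<n. a i * u i)"
    unfolding sum_product ..
  finally show ?thesis
    by simp
qed

lemma quad_form_Suc:
  assumes "\<And>i. i < n \<Longrightarrow> M n i = M i n"
  shows "quad_form (Suc n) M a =
    quad_form n M a + 2 * a n * (\<Sum>i<n. a i * M i n) + a n * a n * M n n"
  using assms unfolding quad_form_def
  by (simp add: sum.distrib sum_distrib_left sum_distrib_right mult_ac)

lemma psd_last_diag_nonneg:
  assumes M: "psd (Suc n) M"
  shows "0 \<le> M n n"
proof -
  have "0 \<le> quad_form (Suc n) M (\<lambda>k. of_bool (k = n))"
    by (rule psd_quad_form_nonneg[OF M])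
  also have "\<dots> = M n n"
    using psd_sym[OF M] by (subst quad_form_Suc) (auto simp: quad_form_def)
  finally show ?thesis .
qed

lemma psd_last_col_eq_0:
  assumes M: "psd (Suc n) M" and "M n n = 0" "i < n"
  shows "M i n = 0"
proof (rule ccontr)
  assume "M i n \<noteq> 0"
  define a where "a = (\<lambda>k. of_bool (k = i) :: real)"
  define t where "t = - (\<bar>quad_form n M a\<bar> + 1) / (2 * M i n)"
  have "(\<Sum>k<n. a k * M k n) = M i n"
    using \<open>i < n\<close> by (simp add: a_def)
  moreover have "quad_form n M (a(n := t)) = quad_form n M a"
    by (rule quad_form_cong) auto
  ultimately have "quad_form (Suc n) M (a(n := t)) = quad_form n M a + 2 * t * M i n"
    using psd_sym[OF M] \<open>M n n = 0\<close> by (subst quad_form_Suc) (auto intro!: sum.cong)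
  also have "\<dots> = quad_form n M a - \<bar>quad_form n M a\<bar> - 1"
    using \<open>M i n \<noteq> 0\<close> by (simp add: t_def)
  finally show False
    using psd_quad_form_nonneg[OF M, of "a(n := t)"] by linarith
qed

(* If M n n = 0, division by zero yields 0 and the Schur complement is just the restriction of M. *)
lemma psd_Schur_complement:
  assumes M: "psd (Suc n) M"
  shows "psd n (\<lambda>i j. M i j - M i n * M n j / M n n)"
proof (rule psdI)
  have sym: "\<And>i j. i < Suc n \<Longrightarrow> j < Suc n \<Longrightarrow> M i j = M j i"
    using psd_sym[OF M] by blast
  show "M i j - M i n * M n j / M n n = M j i - M j n * M n i / M n n" if "i < n" "j < n" for i j
    using sym[of i j] sym[of i n] sym[of j n] that by simp
  fix a
  define L where "L = (\<Sum>i<n. a i * M i n)"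
  have "0 \<le> quad_form (Suc n) M (a(n := - L / M n n))"
    by (rule psd_quad_form_nonneg[OF M])
  also have "\<dots> = quad_form n M a - L\<^sup>2 / M n n"
  proof -
    have "quad_form n M (a(n := - L / M n n)) = quad_form n M a"
      by (rule quad_form_cong) auto
    moreover have "(\<Sum>i<n. (a(n := - L / M n n)) i * M i n) = L"
      unfolding L_def by (intro sum.cong) auto
    ultimately show ?thesis
      using sym by (subst quad_form_Suc) (auto simp: power2_eq_square field_simps)
  qed
  also have "\<dots> = quad_form n (\<lambda>i j. M i j - M i n * M n j / M n n) a"
  proof -
    have "quad_form n (\<lambda>i j. M i n * M n j / M n n) a =
        quad_form n (\<lambda>i j. 1 / M n n * (M i n * M j n)) a"
      using sym by (intro quad_form_cong) auto
    also have "\<dots> = L\<^sup>2 / M n n"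
      unfolding quad_form_rank_one L_def by simp
    finally show ?thesis
      by (simp add: quad_form_diff)
  qed
  finally show "0 \<le> quad_form n (\<lambda>i j. M i j - M i n * M n j / M n n) a" .
qed

lemma psd_Gram:
  "psd n M \<Longrightarrow>
    \<exists>(m::nat) (V::nat \<Rightarrow> nat \<Rightarrow> real). \<forall>i<n. \<forall>j<n. M i j = (\<Sum>k<m. V k i * V k j)"
proof (induction n arbitrary: M)
  case 0
  then show ?case by auto
next
  case (Suc n)
  have sym: "\<And>i j. i < Suc n \<Longrightarrow> j < Suc n \<Longrightarrow> M i j = M j i"
    using psd_sym[OF Suc.prems] by blast
  obtain m :: nat and V :: "nat \<Rightarrow> nat \<Rightarrow> real" where V: "\<And>i j. i < n \<Longrightarrow> j < n \<Longrightarrow>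
      M i j - M i n * M n j / M n n = (\<Sum>k<m. V k i * V k j)"
    using Suc.IH[OF psd_Schur_complement[OF Suc.prems]] by blast
  define W where "W k i = (if k < m then if i < n then V k i else 0 else M i n / sqrt (M n n))"
    for k i
  have last_col: "M i n * M n n / M n n = M i n" if "i < Suc n" for i
    using psd_last_col_eq_0[OF Suc.prems, of i] that by (cases "M n n = 0") (auto simp: less_Suc_eq)
  have "M i j = (\<Sum>k<Suc m. W k i * W k j)" if "i < Suc n" "j < Suc n" for i j
  proof -
    have "(\<Sum>k<Suc m. W k i * W k j) =
        (\<Sum>k<m. (if i < n then V k i else 0) * (if j < n then V k j else 0)) + M i n * M j n / M n n"
      using psd_last_diag_nonneg[OF Suc.prems] by (simp add: W_def)
    moreover have "M i j = M i n * M j n / M n n" if "\<not> (i < n \<and> j < n)"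
    proof -
      have "i = n \<or> j = n"
        using that \<open>i < Suc n\<close> \<open>j < Suc n\<close> by linarith
      then show ?thesis
        using last_col[OF \<open>i < Suc n\<close>] last_col[OF \<open>j < Suc n\<close>] sym[of n j] \<open>j < Suc n\<close> by auto
    qed
    ultimately show ?thesis
      using V[of i j] sym[of j n] by (cases "i < n \<and> j < n") auto
  qed
  then show ?case by blast
qed

lemma psd_Schur_product:
  assumes A: "psd n A" and B: "psd n B"
  shows "psd n (\<lambda>i j. A i j * B i j)"
proof (rule psdI)
  show "A i j * B i j = A j i * B j i" if "i < n" "j < n" for i j
    using psd_sym[OF A that] psd_sym[OF B that] by simp
  fix a
  obtain m :: nat and V :: "nat \<Rightarrow> nat \<Rightarrow> real"
    where V: "\<And>i j. i < n \<Longrightarrow> j < n \<Longrightarrow> A i j = (\<Sum>k<m. V k i * V k j)"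
    using psd_Gram[OF A] by blast
  have "quad_form n (\<lambda>i j. A i j * B i j) a =
      (\<Sum>i<n. \<Sum>j<n. \<Sum>k<m. (a i * V k i) * B i j * (a j * V k j))"
    unfolding quad_form_def using V
    by (intro sum.cong refl) (simp add: sum_distrib_left sum_distrib_right mult_ac)
  also have "\<dots> = (\<Sum>i<n. \<Sum>k<m. \<Sum>j<n. (a i * V k i) * B i j * (a j * V k j))"
    by (rule sum.cong[OF refl], rule sum.swap)
  also have "\<dots> = (\<Sum>k<m. quad_form n B (\<lambda>i. a i * V k i))"
    unfolding quad_form_def by (rule sum.swap)
  also have "\<dots> \<ge> 0"
    by (intro sum_nonneg psd_quad_form_nonneg[OF B])
  finally show "0 \<le> quad_form n (\<lambda>i j. A i j * B i j) a" .
qed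

lemma psd_const_one: "psd n (\<lambda>_ _. 1)"
  by (rule psdI) (use quad_form_rank_one[of n 1 "\<lambda>_. 1"] in simp_all)

lemma psd_power: "psd n A \<Longrightarrow> psd n (\<lambda>i j. A i j ^ k)"
proof (induction k)
  case 0
  show ?case using psd_const_one by simp
next
  case (Suc k)
  show ?case using psd_Schur_product[OF Suc.prems Suc.IH[OF Suc.prems]] by simp
qed

lemma psd_exp:
  assumes A: "psd n A"
  shows "psd n (\<lambda>i j. exp (A i j))"
proof (rule psdI)
  show "exp (A i j) = exp (A j i)" if "i < n" "j < n" for i j
    using psd_sym[OF A that] by simp
  fix a
  have series: "(\<lambda>k. quad_form n (\<lambda>i j. A i j ^ k /\<^sub>R fact k) a) sums quad_form n (\<lambda>i j. exp (A i j)) a"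
    unfolding quad_form_def by (intro sums_sum sums_mult sums_mult2 exp_converges)
  have "0 \<le> quad_form n (\<lambda>i j. A i j ^ k /\<^sub>R fact k) a" for k
  proof -
    have "quad_form n (\<lambda>i j. A i j ^ k /\<^sub>R fact k) a = quad_form n (\<lambda>i j. A i j ^ k) a / fact k"
      by (simp add: quad_form_def divide_inverse sum_distrib_left mult_ac)
    then show ?thesis
      using psd_quad_form_nonneg[OF psd_power[OF A]] by simp
  qed
  then show "0 \<le> quad_form n (\<lambda>i j. exp (A i j)) a"
    using sums_le[OF _ sums_zero series] by simp
qed

lemma psd_diag_congruence:
  assumes A: "psd n A"
  shows "psd n (\<lambda>i j. g i * A i j * g j)"
proof (rule psdI)
  show "g i * A i j * g j = g j * A j i * g i" if "i < n" "j < n" for i j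
    using psd_sym[OF A that] by simp
  have "quad_form n (\<lambda>i j. g i * A i j * g j) a = quad_form n A (\<lambda>i. a i * g i)" for a
    by (simp add: quad_form_def mult_ac)
  then show "0 \<le> quad_form n (\<lambda>i j. g i * A i j * g j) a" for a
    using psd_quad_form_nonneg[OF A] by simp
qed

lemma psd_scale:
  assumes A: "psd n A" and "0 \<le> c"
  shows "psd n (\<lambda>i j. c * A i j)"
proof (rule psdI)
  show "c * A i j = c * A j i" if "i < n" "j < n" for i j
    using psd_sym[OF A that] by simp
  have "quad_form n (\<lambda>i j. c * A i j) a = c * quad_form n A a" for a
    by (simp add: quad_form_def sum_distrib_left mult_ac)
  then show "0 \<le> quad_form n (\<lambda>i j. c * A i j) a" for a
    using psd_quad_form_nonneg[OF A] \<open>0 \<le> c\<close> by simp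
qed

lemma negative_type_diag: "negative_type h \<Longrightarrow> h x x = 0"
  unfolding negative_type_def by blast

lemma negative_type_sym: "negative_type h \<Longrightarrow> h x y = h y x"
  unfolding negative_type_def by blast

lemma negative_type_quad_form:
  assumes "negative_type h" "(\<Sum>j<n. a j) = 0"
  shows "quad_form n (\<lambda>i j. h (x i) (x j)) a \<le> 0"
  using assms unfolding negative_type_def quad_form_def by (cases "n = 0") auto

lemma negative_type_nonneg:
  assumes h: "negative_type h"
  shows "0 \<le> h x y"
proof -
  have "quad_form 2 (\<lambda>i j. h ((\<lambda>k. if k = 0 then x else y) i) ((\<lambda>k. if k = 0 then x else y) j))
      (\<lambda>k. if k = 0 then 1 else -1) \<le> 0"
    by (rule negative_type_quad_form[OF h]) (simp add: numeral_2_eq_2)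
  then show ?thesis
    using negative_type_diag[OF h] negative_type_sym[OF h, of x y]
    by (simp add: quad_form_def numeral_2_eq_2)
qed

lemma psd_negative_type_kernel:
  assumes h: "negative_type h"
  shows "psd n (\<lambda>i j. h (x i) z + h (x j) z - h (x i) (x j))"
proof (rule psdI)
  show "h (x i) z + h (x j) z - h (x i) (x j) = h (x j) z + h (x i) z - h (x j) (x i)" for i j
    using negative_type_sym[OF h] by simp
  fix a :: "nat \<Rightarrow> real"
  define S where "S = (\<Sum>i<n. a i)"
  define T where "T = (\<Sum>i<n. a i * h (x i) z)"
  have "quad_form (Suc n) (\<lambda>i j. h ((x(n := z)) i) ((x(n := z)) j)) (a(n := - S)) \<le> 0"
    by (rule negative_type_quad_form[OF h]) (simp add: S_def)
  moreover have "quad_form n (\<lambda>i j. h ((x(n := z)) i) ((x(n := z)) j)) (a(n := - S)) =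
      quad_form n (\<lambda>i j. h (x i) (x j)) a"
    by (rule quad_form_cong) auto
  moreover have "(\<Sum>i<n. (a(n := - S)) i * h ((x(n := z)) i) z) = T"
    unfolding T_def by (rule sum.cong) auto
  ultimately have "quad_form n (\<lambda>i j. h (x i) (x j)) a - 2 * S * T \<le> 0"
    using negative_type_sym[OF h] negative_type_diag[OF h] by (subst (asm) quad_form_Suc) auto
  moreover have "quad_form n (\<lambda>i j. h (x i) z + h (x j) z - h (x i) (x j)) a =
      2 * S * T - quad_form n (\<lambda>i j. h (x i) (x j)) a"
    unfolding quad_form_diff quad_form_sum_kernel S_def T_def ..
  ultimately show "0 \<le> quad_form n (\<lambda>i j. h (x i) z + h (x j) z - h (x i) (x j)) a"
    by simp
qed

lemma psd_exp_negative_type: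
  assumes h: "negative_type h" and "0 \<le> t"
  shows "psd n (\<lambda>i j. exp (- t * h (x i) (x j)))"
proof -
  let ?g = "\<lambda>i. exp (- t * h (x i) (x 0))"
  have "psd n (\<lambda>i j. t * (h (x i) (x 0) + h (x j) (x 0) - h (x i) (x j)))"
    by (intro psd_scale psd_negative_type_kernel h \<open>0 \<le> t\<close>)
  then have "psd n (\<lambda>i j. ?g i * exp (t * (h (x i) (x 0) + h (x j) (x 0) - h (x i) (x j))) * ?g j)"
    by (intro psd_diag_congruence psd_exp)
  moreover have "?g i * exp (t * (h (x i) (x 0) + h (x j) (x 0) - h (x i) (x j))) * ?g j =
      exp (- t * h (x i) (x j))" for i j
    by (simp add: exp_add[symmetric] algebra_simps)
  ultimately show ?thesis
    by simp
qed

lemma pos_def_kernel_of_psd: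
  assumes k: "\<And>n x. psd n (\<lambda>i j. k (x i) (x j))"
  shows "pos_def_kernel (\<lambda>u v. complex_of_real (k u v))"
  unfolding pos_def_kernel_def Let_def
proof (intro allI impI conjI)
  fix n :: nat and x :: "nat \<Rightarrow> 'a" and z :: "nat \<Rightarrow> complex"
  let ?K = "\<lambda>i j. k (x i) (x j)"
  have "Im (\<Sum>i<n. \<Sum>j<n. cnj (z i) * complex_of_real (?K i j) * z j) =
      (\<Sum>i<n. \<Sum>j<n. Re (z i) * ?K i j * Im (z j)) - (\<Sum>i<n. \<Sum>j<n. Im (z i) * ?K i j * Re (z j))"
    by (simp add: Im_sum algebra_simps sum_subtractf)
  also have "(\<Sum>i<n. \<Sum>j<n. Re (z i) * ?K i j * Im (z j)) = (\<Sum>j<n. \<Sum>i<n. Re (z i) * ?K i j * Im (z j))"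
    by (rule sum.swap)
  also have "\<dots> = (\<Sum>i<n. \<Sum>j<n. Im (z i) * ?K i j * Re (z j))"
    using psd_sym[OF k] by (intro sum.cong refl) (simp add: mult_ac)
  finally show "Im (\<Sum>i<n. \<Sum>j<n. cnj (z i) * complex_of_real (?K i j) * z j) = 0"
    by simp
  have "Re (\<Sum>i<n. \<Sum>j<n. cnj (z i) * complex_of_real (?K i j) * z j) =
      quad_form n ?K (\<lambda>i. Re (z i)) + quad_form n ?K (\<lambda>i. Im (z i))"
    by (simp add: quad_form_def Re_sum algebra_simps sum.distrib)
  then show "0 \<le> Re (\<Sum>i<n. \<Sum>j<n. cnj (z i) * complex_of_real (?K i j) * z j)"
    using psd_quad_form_nonneg[OF k] by simp
qed

theorem Schoenberg_pos_def_kernel_exp: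
  assumes "negative_type h" "0 \<le> t"
  shows "pos_def_kernel (\<lambda>x y. complex_of_real (exp (- t * h x y)))"
  by (rule pos_def_kernel_of_psd) (rule psd_exp_negative_type[OF assms])

lemma pos_def_kernel_Re_nonneg:
  fixes n :: nat
  assumes "pos_def_kernel u"
  shows "0 \<le> Re (\<Sum>i<n. \<Sum>j<n. cnj (z i) * u (x i) (x j) * z j)"
proof (cases "n = 0")
  case False
  from assms have "1 \<le> n \<longrightarrow>
      (let s = \<Sum>i<n. \<Sum>j<n. cnj (z i) * u (x i) (x j) * z j in Im s = 0 \<and> 0 \<le> Re s)"
    unfolding pos_def_kernel_def by blast
  then show ?thesis
    using False by (simp add: Let_def)
qed simp

lemma pos_def_kernel_Re_quad_form:
  assumes "pos_def_kernel u"
  shows "0 \<le> quad_form n (\<lambda>i j. Re (u (x i) (x j))) a"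
  using pos_def_kernel_Re_nonneg[OF assms, where z = "\<lambda>i. complex_of_real (a i)"]
  by (simp add: quad_form_def Re_sum)

(* If u x y is the inner product of vectors v y and v x, this is the squared distance of v x and v y. *)
definition negtype_of_pd :: "('a \<Rightarrow> 'a \<Rightarrow> complex) \<Rightarrow> 'a \<Rightarrow> 'a \<Rightarrow> real" where
  "negtype_of_pd u x y = Re (u x x) + Re (u y y) - Re (u x y) - Re (u y x)"

lemma negative_type_negtype_of_pd:
  assumes u: "pos_def_kernel u"
  shows "negative_type (negtype_of_pd u)"
  unfolding negative_type_def
proof (intro conjI allI impI)
  show "negtype_of_pd u x x = 0" "negtype_of_pd u x y = negtype_of_pd u y x" for x y
    by (simp_all add: negtype_of_pd_def)
  fix n :: nat and x :: "nat \<Rightarrow> 'a" and a :: "nat \<Rightarrow> real"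
  assume "(\<Sum>j<n. a j) = 0"
  let ?R = "\<lambda>i j. Re (u (x i) (x j))"
  have "quad_form n (\<lambda>i j. negtype_of_pd u (x i) (x j)) a =
      quad_form n (\<lambda>i j. (?R i i + ?R j j) - (?R i j + ?R j i)) a"
    by (simp add: negtype_of_pd_def algebra_simps)
  also have "\<dots> =
      quad_form n (\<lambda>i j. ?R i i + ?R j j) a - (quad_form n ?R a + quad_form n (\<lambda>i j. ?R j i) a)"
    by (simp only: quad_form_diff quad_form_add)
  also have "\<dots> = - 2 * quad_form n ?R a"
    unfolding quad_form_sum_kernel quad_form_transpose[of n ?R] \<open>(\<Sum>j<n. a j) = 0\<close> by simp
  also have "\<dots> \<le> 0"
    using pos_def_kernel_Re_quad_form[OF u] by simp
  finally show "(\<Sum>i<n. \<Sum>j<n. a i * negtype_of_pd u (x i) (x j) * a j) \<le> 0"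
    by (simp add: quad_form_def)
qed

lemma negtype_of_pd_le:
  assumes "\<And>a b. a \<in> {x, y} \<Longrightarrow> b \<in> {x, y} \<Longrightarrow> norm (u a b - 1) \<le> \<delta>"
  shows "negtype_of_pd u x y \<le> 4 * \<delta>"
proof -
  have "\<bar>Re (u a b) - 1\<bar> \<le> \<delta>" if "a \<in> {x, y}" "b \<in> {x, y}" for a b
    using abs_Re_le_cmod[of "u a b - 1"] assms[OF that] by simp
  from this[of x x] this[of y y] this[of x y] this[of y x] show ?thesis
    unfolding negtype_of_pd_def by auto
qed

lemma negtype_of_pd_ge:
  "Re (u x x) + Re (u y y) - norm (u x y) - norm (u y x) \<le> negtype_of_pd u x y"
  using abs_Re_le_cmod[of "u x y"] abs_Re_le_cmod[of "u y x"] unfolding negtype_of_pd_def by linarith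

lemma negtype_of_pd_bounded:
  assumes "u \<in> C0_diag d"
  shows "\<exists>C. \<forall>x y. negtype_of_pd u x y \<le> C"
proof -
  obtain B where B: "\<And>x y. norm (u x y) \<le> B"
    using assms unfolding C0_diag_def by blast
  have "negtype_of_pd u x y \<le> 4 * B" for x y
    using abs_Re_le_cmod[of "u x x"] abs_Re_le_cmod[of "u y y"] abs_Re_le_cmod[of "u x y"]
      abs_Re_le_cmod[of "u y x"] B[of x x] B[of y y] B[of x y] B[of y x]
    unfolding negtype_of_pd_def by linarith
  then show ?thesis
    by blast
qed

lemma negtype_of_pd_large:
  assumes "u \<in> C0_diag d" and diag: "\<And>x. 3 / 4 \<le> Re (u x x)" and d_sym: "\<And>x y. d x y = d y x"
  shows "\<exists>S. \<forall>x y. S < d x y \<longrightarrow> 1 \<le> negtype_of_pd u x y"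
proof -
  have "(0::real) < 1 / 4"
    by simp
  then obtain S where S: "\<And>x y. S < d x y \<Longrightarrow> norm (u x y) < 1 / 4"
    using assms(1) unfolding C0_diag_def by blast
  have "1 \<le> negtype_of_pd u x y" if "S < d x y" for x y
    using S[OF that] S[of y x] that d_sym[of x y] diag[of x] diag[of y] negtype_of_pd_ge[of u x y]
    by linarith
  then show ?thesis
    by blast
qed

lemma negative_type_suminf:
  assumes g: "\<And>k. negative_type (g k)" and summable: "\<And>x y. summable (\<lambda>k. g k x y)"
  shows "negative_type (\<lambda>x y. \<Sum>k. g k x y)"
  unfolding negative_type_def
proof (intro conjI allI impI)
  show "(\<Sum>k. g k x x) = 0" "(\<Sum>k. g k x y) = (\<Sum>k. g k y x)" for x y
    using negative_type_diag[OF g] negative_type_sym[OF g] by simp_all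
  fix n :: nat and x :: "nat \<Rightarrow> 'a" and a :: "nat \<Rightarrow> real"
  assume "(\<Sum>j<n. a j) = 0"
  have "(\<lambda>k. quad_form n (\<lambda>i j. g k (x i) (x j)) a) sums quad_form n (\<lambda>i j. \<Sum>k. g k (x i) (x j)) a"
    unfolding quad_form_def by (intro sums_sum sums_mult sums_mult2 summable_sums summable)
  then have "quad_form n (\<lambda>i j. \<Sum>k. g k (x i) (x j)) a \<le> 0"
    by (rule sums_le[OF negative_type_quad_form[OF g \<open>(\<Sum>j<n. a j) = 0\<close>] _ sums_zero])
  then show "(\<Sum>i<n. \<Sum>j<n. a i * (\<Sum>k. g k (x i) (x j)) * a j) \<le> 0"
    by (simp add: quad_form_def)
qed

lemma summable_kernel_series:
  fixes g :: "nat \<Rightarrow> 'a \<Rightarrow> 'a \<Rightarrow> real"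
  assumes nonneg: "\<And>k x y. 0 \<le> g k x y"
    and small: "\<And>k x y. d x y \<le> real k \<Longrightarrow> g k x y \<le> (1/2)^k"
  shows "summable (\<lambda>k. g k x y)"
proof (rule summable_comparison_test')
  show "summable (\<lambda>k. (1/2::real)^k)"
    by (rule summable_geometric) simp
  show "norm (g k x y) \<le> (1/2)^k" if "nat \<lceil>d x y\<rceil> \<le> k" for k
    using that nonneg small[of x y k] by (simp add: nat_le_iff ceiling_le_iff)
qed

lemma kernel_series_bounded:
  fixes g :: "nat \<Rightarrow> 'a \<Rightarrow> 'a \<Rightarrow> real"
  assumes nonneg: "\<And>k x y. 0 \<le> g k x y"
    and small: "\<And>k x y. d x y \<le> real k \<Longrightarrow> g k x y \<le> (1/2)^k"
    and bounded: "\<And>k x y. g k x y \<le> B k"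
  shows "\<exists>C. \<forall>x y. d x y \<le> R \<longrightarrow> (\<Sum>k. g k x y) \<le> C"
proof (intro exI allI impI)
  define c where "c k = (if real k < R then B k else (1/2)^k)" for k
  have "summable c"
  proof (rule summable_comparison_test')
    show "summable (\<lambda>k. (1/2::real)^k)"
      by (rule summable_geometric) simp
    show "norm (c k) \<le> (1/2)^k" if "nat \<lceil>R\<rceil> \<le> k" for k
      using that by (simp add: c_def nat_le_iff ceiling_le_iff)
  qed
  fix x y assume "d x y \<le> R"
  then have "g k x y \<le> c k" for k
    using bounded small[of x y k] by (simp add: c_def)
  then show "(\<Sum>k. g k x y) \<le> suminf c"
    by (rule suminf_le[OF _ summable_kernel_series[where d = d, OF nonneg small] \<open>summable c\<close>])
qed

lemma kernel_series_large:
  fixes g :: "nat \<Rightarrow> 'a \<Rightarrow> 'a \<Rightarrow> real"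
  assumes nonneg: "\<And>k x y. 0 \<le> g k x y"
    and small: "\<And>k x y. d x y \<le> real k \<Longrightarrow> g k x y \<le> (1/2)^k"
    and large: "\<And>k x y. S k < d x y \<Longrightarrow> 1 \<le> g k x y"
  shows "\<exists>R>0. \<forall>x y. R < d x y \<longrightarrow> C < (\<Sum>k. g k x y)"
proof (intro exI conjI allI impI)
  define m where "m = nat \<lceil>C\<rceil> + 1"
  define R where "R = 1 + (\<Sum>k<m. \<bar>S k\<bar>)"
  show "0 < R"
    unfolding R_def by (simp add: add_pos_nonneg sum_nonneg)
  fix x y assume "R < d x y"
  have "S k < d x y" if "k < m" for k
  proof -
    have "S k \<le> (\<Sum>k<m. \<bar>S k\<bar>)"
      using member_le_sum[of k "{..<m}" "\<lambda>k. \<bar>S k\<bar>"] that by simp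
    then show ?thesis
      using \<open>R < d x y\<close> by (simp add: R_def)
  qed
  then have "real m \<le> (\<Sum>k<m. g k x y)"
    using large sum_mono[of "{..<m}" "\<lambda>_. 1" "\<lambda>k. g k x y"] by simp
  also have "\<dots> \<le> (\<Sum>k. g k x y)"
    by (rule sum_le_suminf[OF summable_kernel_series[where d = d, OF nonneg small]]) (simp_all add: nonneg)
  finally show "C < (\<Sum>k. g k x y)"
    using real_nat_ceiling_ge[of C] by (simp add: m_def)
qed

lemma metrically_proper_kernel_series:
  fixes g :: "nat \<Rightarrow> 'a \<Rightarrow> 'a \<Rightarrow> real"
  assumes nonneg: "\<And>k x y. 0 \<le> g k x y"
    and small: "\<And>k x y. d x y \<le> real k \<Longrightarrow> g k x y \<le> (1/2)^k"
    and bounded: "\<And>k. \<exists>B. \<forall>x y. g k x y \<le> B"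
    and large: "\<And>k. \<exists>S. \<forall>x y. S < d x y \<longrightarrow> 1 \<le> g k x y"
  shows "metrically_proper d (\<lambda>x y. \<Sum>k. g k x y)"
proof -
  obtain B :: "nat \<Rightarrow> real" where B: "\<And>k x y. g k x y \<le> B k"
    using bounded by metis
  obtain S :: "nat \<Rightarrow> real" where S: "\<And>k x y. S k < d x y \<Longrightarrow> 1 \<le> g k x y"
    using large by metis
  have "summable (\<lambda>k. g k x y)" for x y
    by (rule summable_kernel_series[where d = d, OF nonneg small])
  then have "0 \<le> (\<Sum>k. g k x y)" for x y
    by (rule suminf_nonneg) (rule nonneg)
  then have "norm (\<Sum>k. g k x y) = (\<Sum>k. g k x y)" for x y
    by simp
  then show ?thesis
    unfolding metrically_proper_def
    using kernel_series_bounded[where d = d, OF nonneg small B]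
      kernel_series_large[where d = d, OF nonneg small S] by simp
qed

lemma sup_norm_le: "(\<And>x y. norm (g x y) \<le> M) \<Longrightarrow> sup_norm g \<le> M"
  unfolding sup_norm_def by (rule cSUP_least) auto

lemma norm_le_sup_norm:
  assumes "\<And>x y. norm (g x y) \<le> M"
  shows "norm (g x y) \<le> sup_norm g"
proof -
  have "bdd_above (range (\<lambda>p. norm (g (fst p) (snd p))))"
    using assms by (intro bdd_aboveI2)
  then show ?thesis
    unfolding sup_norm_def using cSUP_upper[of "(x, y)" UNIV "\<lambda>p. norm (g (fst p) (snd p))"] by simp
qed

lemma sup_norm_nonneg: "(\<And>x y. norm (g x y) \<le> M) \<Longrightarrow> 0 \<le> sup_norm g"
  using norm_le_sup_norm norm_ge_zero order_trans by metis

lemma exp_negative_type_in_C0_diag: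
  assumes h: "negative_type h" and "metrically_proper d h" and "0 < t"
  shows "(\<lambda>x y. complex_of_real (exp (- t * h x y))) \<in> C0_diag d"
  unfolding C0_diag_def
proof (intro CollectI conjI allI impI)
  show "\<exists>B. \<forall>x y. norm (complex_of_real (exp (- t * h x y))) \<le> B"
    using negative_type_nonneg[OF h] \<open>0 < t\<close> by (intro exI[of _ 1]) simp
  fix \<epsilon> :: real assume "0 < \<epsilon>"
  define C where "C = \<bar>ln \<epsilon>\<bar> / t + 1"
  have "0 < C"
    using \<open>0 < t\<close> by (simp add: C_def add_nonneg_pos)
  then obtain R where "0 < R" and R: "\<And>x y. R < d x y \<Longrightarrow> C < norm (h x y)"
    using \<open>metrically_proper d h\<close> unfolding metrically_proper_def by blast
  show "\<exists>R>0. \<forall>x y. R < d x y \<longrightarrow> norm (complex_of_real (exp (- t * h x y))) < \<epsilon>"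
  proof (intro exI conjI allI impI)
    fix x y assume "R < d x y"
    then have "t * C < t * h x y"
      using R[of x y] negative_type_nonneg[OF h, of x y] \<open>0 < t\<close> by simp
    moreover have "t * C = \<bar>ln \<epsilon>\<bar> + t"
      using \<open>0 < t\<close> by (simp add: C_def field_simps)
    ultimately have "- t * h x y < ln \<epsilon>"
      using \<open>0 < t\<close> by linarith
    then have "exp (- t * h x y) < \<epsilon>"
      using \<open>0 < \<epsilon>\<close> by (metis exp_less_cancel_iff exp_ln)
    then show "norm (complex_of_real (exp (- t * h x y))) < \<epsilon>"
      by simp
  qed (rule \<open>0 < R\<close>)
qed

lemma norm_exp_neg_mult_sub:
  assumes "0 \<le> s"
  shows "norm (complex_of_real (exp (- s)) * z - z) \<le> min 1 s * norm z"
proof -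
  have gap: "0 \<le> 1 - exp (- s)" "1 - exp (- s) \<le> min 1 s"
    using exp_ge_add_one_self[of "- s"] assms by auto
  have "norm (complex_of_real (exp (- s)) * z - z) = norm (complex_of_real (1 - exp (- s)) * z)"
    by (simp add: algebra_simps norm_minus_commute)
  also have "\<dots> = (1 - exp (- s)) * norm z"
    by (simp only: norm_mult norm_of_real abs_of_nonneg[OF gap(1)])
  also have "\<dots> \<le> min 1 s * norm z"
    using gap(2) by (rule mult_right_mono) simp
  finally show ?thesis .
qed

lemma exp_negative_type_uniform_estimate:
  assumes h: "negative_type h" and "metrically_proper d h" and f: "f \<in> C0_diag d"
    and "0 < \<epsilon>"
  shows "\<exists>b>0. \<forall>t. 0 < t \<and> t < b \<longrightarrow>
    (\<forall>x y. norm (complex_of_real (exp (- t * h x y)) * f x y - f x y) \<le> \<epsilon>)"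
proof -
  obtain B where B: "\<And>x y. norm (f x y) \<le> B"
    using f unfolding C0_diag_def by blast
  obtain R where "0 < R" and R: "\<And>x y. R < d x y \<Longrightarrow> norm (f x y) < \<epsilon>"
    using f \<open>0 < \<epsilon>\<close> unfolding C0_diag_def by blast
  obtain H where H: "\<And>x y. d x y \<le> R \<Longrightarrow> norm (h x y) \<le> H"
    using \<open>metrically_proper d h\<close> \<open>0 < R\<close> unfolding metrically_proper_def by blast
  define K where "K = (\<bar>H\<bar> + 1) * (\<bar>B\<bar> + 1)"
  have "0 < K"
    unfolding K_def by (intro mult_pos_pos) linarith+
  have "norm (complex_of_real (exp (- t * h x y)) * f x y - f x y) \<le> \<epsilon>"
    if "0 < t" "t < \<epsilon> / K" for t x y
  proof -
    have "0 \<le> t * h x y"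
      using negative_type_nonneg[OF h] \<open>0 < t\<close> by simp
    then have approx: "norm (complex_of_real (exp (- t * h x y)) * f x y - f x y) \<le>
        min 1 (t * h x y) * norm (f x y)"
      using norm_exp_neg_mult_sub[of "t * h x y" "f x y"] by simp
    show ?thesis
    proof (cases "d x y \<le> R")
      case True
      have "t * h x y \<le> t * (\<bar>H\<bar> + 1)"
        using H[OF True] \<open>0 < t\<close> by (intro mult_left_mono) auto
      then have "min 1 (t * h x y) \<le> t * (\<bar>H\<bar> + 1)"
        by (rule order_trans[OF min.cobounded2])
      then have "min 1 (t * h x y) * norm (f x y) \<le> (t * (\<bar>H\<bar> + 1)) * (\<bar>B\<bar> + 1)"
        using B[of x y] \<open>0 < t\<close> by (intro mult_mono) auto
      also have "\<dots> = t * K"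
        by (simp add: K_def)
      also have "\<dots> < \<epsilon>"
        using \<open>t < \<epsilon> / K\<close> by (simp only: pos_less_divide_eq[OF \<open>0 < K\<close>])
      finally show ?thesis
        using approx by simp
    next
      case False
      have "min 1 (t * h x y) * norm (f x y) \<le> norm (f x y)"
        using \<open>0 \<le> t * h x y\<close> by (simp add: mult_left_le_one_le)
      then show ?thesis
        using approx R[of x y] False by simp
    qed
  qed
  moreover have "0 < \<epsilon> / K"
    using \<open>0 < \<epsilon>\<close> \<open>0 < K\<close> by simp
  ultimately show ?thesis
    by blast
qed

lemma exp_negative_type_approx_one:
  assumes "negative_type h" "metrically_proper d h" "f \<in> C0_diag d"
  shows "((\<lambda>t. sup_norm (\<lambda>x y. complex_of_real (exp (- t * h x y)) * f x y - f x y)) \<longlongrightarrow> 0)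
    (at_right 0)"
  unfolding tendsto_iff
proof (intro allI impI)
  fix e :: real assume "0 < e"
  then obtain b where "0 < b" and b: "\<And>t x y. 0 < t \<Longrightarrow> t < b \<Longrightarrow>
      norm (complex_of_real (exp (- t * h x y)) * f x y - f x y) \<le> e / 2"
    using exp_negative_type_uniform_estimate[OF assms, of "e / 2"] by auto
  have "\<forall>\<^sub>F t in at_right 0. 0 < t \<and> t < b"
    unfolding eventually_at_right_field using \<open>0 < b\<close> by blast
  then show "\<forall>\<^sub>F t in at_right 0.
      dist (sup_norm (\<lambda>x y. complex_of_real (exp (- t * h x y)) * f x y - f x y)) 0 < e"
  proof (rule eventually_mono)
    fix t assume "0 < t \<and> t < b"
    then have "sup_norm (\<lambda>x y. complex_of_real (exp (- t * h x y)) * f x y - f x y) \<le> e / 2"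
      and "0 \<le> sup_norm (\<lambda>x y. complex_of_real (exp (- t * h x y)) * f x y - f x y)"
      using b by (blast intro: sup_norm_le sup_norm_nonneg)+
    then show "dist (sup_norm (\<lambda>x y. complex_of_real (exp (- t * h x y)) * f x y - f x y)) 0 < e"
      using \<open>0 < e\<close> by (simp add: dist_real_def)
  qed
qed

lemma pd_approx_unit_exp_negative_type:
  assumes h: "negative_type h" and "metrically_proper d h"
  shows "pd_approx_unit d (filtermap (\<lambda>t x y. complex_of_real (exp (- t * h x y))) (at_right 0))"
  unfolding pd_approx_unit_def
proof (intro conjI ballI)
  show "filtermap (\<lambda>t x y. complex_of_real (exp (- t * h x y))) (at_right 0) \<noteq> bot"
    by (simp add: filtermap_bot_iff)
  have "\<forall>\<^sub>F t in at_right (0::real). 0 < t"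
    by (rule eventually_at_right_less)
  then show "\<forall>\<^sub>F u in filtermap (\<lambda>t x y. complex_of_real (exp (- t * h x y))) (at_right 0).
      u \<in> C0_diag d \<and> pos_def_kernel u"
    unfolding eventually_filtermap
    by eventually_elim
      (use exp_negative_type_in_C0_diag[OF assms] Schoenberg_pos_def_kernel_exp[OF h] in auto)
  fix f assume "f \<in> C0_diag d"
  then show "((\<lambda>u. sup_norm (\<lambda>x y. u x y * f x y - f x y)) \<longlongrightarrow> 0)
      (filtermap (\<lambda>t x y. complex_of_real (exp (- t * h x y))) (at_right 0))"
    unfolding filterlim_filtermap by (rule exp_negative_type_approx_one[OF assms])
qed

lemma pd_approx_unit_near_one:
  assumes F: "pd_approx_unit d F" and "0 < \<delta>"
  shows "\<exists>u\<in>C0_diag d. pos_def_kernel u \<and> (\<forall>x y. d x y \<le> R \<longrightarrow> norm (u x y - 1) < \<delta>)"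
proof -
  define f where "f x y = (if d x y \<le> R then 1 else 0 :: complex)" for x y
  have f_bounded: "norm (f x y) \<le> 1" for x y
    by (simp add: f_def)
  have "f \<in> C0_diag d"
    unfolding C0_diag_def
  proof (intro CollectI conjI allI impI)
    show "\<exists>B. \<forall>x y. norm (f x y) \<le> B"
      using f_bounded by blast
    show "\<exists>R'>0. \<forall>x y. R' < d x y \<longrightarrow> norm (f x y) < \<epsilon>" if "0 < \<epsilon>" for \<epsilon>
      using that by (intro exI[of _ "max R 0 + 1"]) (auto simp: f_def)
  qed
  then have "\<forall>\<^sub>F u in F. dist (sup_norm (\<lambda>x y. u x y * f x y - f x y)) 0 < \<delta>"
    using F \<open>0 < \<delta>\<close> unfolding pd_approx_unit_def tendsto_iff by blast
  moreover have "\<forall>\<^sub>F u in F. u \<in> C0_diag d \<and> pos_def_kernel u" and "F \<noteq> bot"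
    using F unfolding pd_approx_unit_def by blast+
  ultimately obtain u where u: "u \<in> C0_diag d" "pos_def_kernel u"
    and close: "dist (sup_norm (\<lambda>x y. u x y * f x y - f x y)) 0 < \<delta>"
    using eventually_happens'[OF \<open>F \<noteq> bot\<close> eventually_conj] by blast
  obtain B where B: "\<And>x y. norm (u x y) \<le> B"
    using u(1) unfolding C0_diag_def by blast
  have bounded: "norm (u x y * f x y - f x y) \<le> B + 1" for x y
    using norm_triangle_ineq4[of "u x y * f x y" "f x y"] B[of x y] order_trans[OF norm_ge_zero B[of x y]]
    by (auto simp: f_def)
  have "norm (u x y - 1) < \<delta>" if "d x y \<le> R" for x y
  proof -
    have "norm (u x y - 1) = norm (u x y * f x y - f x y)"
      using that by (simp add: f_def)
    also have "\<dots> \<le> sup_norm (\<lambda>x y. u x y * f x y - f x y)"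
      by (rule norm_le_sup_norm[OF bounded])
    also have "\<dots> < \<delta>"
      using close sup_norm_nonneg[OF bounded] by (simp add: dist_real_def)
    finally show ?thesis .
  qed
  with u show ?thesis
    by blast
qed

lemma negative_type_metrically_proper_of_pd_approx_unit:
  fixes d :: "'a \<Rightarrow> 'a \<Rightarrow> real"
  assumes d: "Metric_space UNIV d" and F: "pd_approx_unit d F"
  shows "\<exists>h. negative_type h \<and> metrically_proper d h"
proof -
  have d_diag: "d z z = 0" for z
    using Metric_space.zero[OF d] by simp
  have d_sym: "d z w = d w z" for z w
    by (rule Metric_space.commute[OF d])
  \<comment> \<open>The tolerance 2^-k/4 gives g k <= 2^-k on the tube d <= k and Re (U k x x) >= 3/4.\<close>
  have "\<forall>k::nat. \<exists>u\<in>C0_diag d. pos_def_kernel u \<and>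
      (\<forall>x y. d x y \<le> real k \<longrightarrow> norm (u x y - 1) < (1/2)^k / 4)"
    by (intro allI pd_approx_unit_near_one[OF F]) simp
  then obtain U where U_C0: "\<And>k. U k \<in> C0_diag d" and U_pd: "\<And>k. pos_def_kernel (U k)"
    and U_near: "\<And>k x y. d x y \<le> real k \<Longrightarrow> norm (U k x y - 1) < (1/2)^k / 4"
    by metis
  define g where "g k = negtype_of_pd (U k)" for k
  have g_negtype: "negative_type (g k)" for k
    unfolding g_def by (rule negative_type_negtype_of_pd[OF U_pd])
  have nonneg: "0 \<le> g k x y" for k x y
    by (rule negative_type_nonneg[OF g_negtype])
  have diag_near: "Re (U k x x) \<ge> 3 / 4" for k x
  proof -
    have "\<bar>Re (U k x x) - 1\<bar> < (1/2)^k / 4"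
      using U_near[of x x k] abs_Re_le_cmod[of "U k x x - 1"] d_diag[of x] by simp
    moreover have "(1/2::real)^k \<le> 1"
      by (simp add: power_le_one)
    ultimately show ?thesis
      by linarith
  qed
  have small: "g k x y \<le> (1/2)^k" if "d x y \<le> real k" for k x y
  proof -
    have "norm (U k a b - 1) \<le> (1/2)^k / 4" if "a \<in> {x, y}" "b \<in> {x, y}" for a b
      using that \<open>d x y \<le> real k\<close> U_near[of a b k] d_diag d_sym[of x y]
      by (auto intro: less_imp_le)
    then show ?thesis
      unfolding g_def using negtype_of_pd_le[of x y "U k" "(1/2)^k / 4"] by simp
  qed
  have bounded: "\<exists>C. \<forall>x y. g k x y \<le> C" for k
    unfolding g_def by (rule negtype_of_pd_bounded[OF U_C0])
  have large: "\<exists>S. \<forall>x y. S < d x y \<longrightarrow> 1 \<le> g k x y" for k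
    unfolding g_def by (rule negtype_of_pd_large[OF U_C0 diag_near d_sym])
  have "summable (\<lambda>k. g k x y)" for x y
    by (rule summable_kernel_series[where d = d, OF nonneg small])
  with g_negtype have "negative_type (\<lambda>x y. \<Sum>k. g k x y)"
    by (rule negative_type_suminf)
  moreover have "metrically_proper d (\<lambda>x y. \<Sum>k. g k x y)"
    by (rule metrically_proper_kernel_series[OF nonneg small bounded large])
  ultimately show ?thesis
    by blast
qed

theorem theorem2p1:
  fixes d :: "'a \<Rightarrow> 'a \<Rightarrow> real"
  assumes "Metric_space (UNIV :: 'a set) d"
  shows "(\<exists>F. pd_approx_unit d F) \<longleftrightarrow>
         (\<exists>h :: 'a \<Rightarrow> 'a \<Rightarrow> real. negative_type h \<and> metrically_proper d h)"
proof
  assume "\<exists>F. pd_approx_unit d F"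
  then show "\<exists>h. negative_type h \<and> metrically_proper d h"
    using negative_type_metrically_proper_of_pd_approx_unit[OF assms] by blast
next
  assume "\<exists>h. negative_type h \<and> metrically_proper d h"
  then show "\<exists>F. pd_approx_unit d F"
    using pd_approx_unit_exp_negative_type by blast
qed

end
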